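(* Let $(T_k)_{k\in\mathbb{N}}$ be i.i.d. with law $\mathcal{T}$ and let $(R_k)_{k\in\mathbb{N}}$ be an independent sequence of independent (not necessarily identically distributed) $[0,\infty]$-valued random variables with $\prod_{k=1}^\infty\mathsf{P}(R_k<T_k)=0$, and let $\tilde T$ be defined a.s. by $\tilde T=R_1+\cdots+R_{k-1}+T_k$ on $\{R_1<T_1,\ldots,R_{k-1}<T_{k-1},T_k\leq R_k\}$, $k\in\mathbb{N}$. If $\overline{F}$ is supermultiplicative then $\mathsf{P}(\tilde T>t)\leq\overline{F}(t)$ for all $t\in[0,\infty)$. If $\overline{F}$ is submultiplicative and additionally $\sum_{l=1}^kR_l\uparrow\infty$ a.s. as $k\to\infty$, then $\mathsf{P}(\tilde T>t)\geq\overline{F}(t)$ for all $t\in[0,\infty)$.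
   Context: Standing assumptions: $\mathcal{T}$ is a probability law on the Borel sets of $[0,\infty]$ with $\mathcal{T}((0,\infty])>0$ and $\inf\mathrm{supp}(\mathcal{T})=0$; $\overline{F}(t):=\mathcal{T}((t,\infty])$ for $t\in[0,\infty)$. $\overline{F}$ is supermultiplicative if $\overline{F}(x+y)\geq\overline{F}(x)\overline{F}(y)$ for all $x,y\in[0,\infty)$, submultiplicative if the reverse inequality holds for all $x,y$. *)

theory Defs
  imports "HOL-Probability.Probability"
begin

definition measure_support :: "'b::topological_space measure \<Rightarrow> 'b set" where
  "measure_support N = {x. \<forall>U. open U \<and> x \<in> U \<longrightarrow> emeasure N U > 0}"

definition Fbar :: "ennreal measure \<Rightarrow> real \<Rightarrow> real" where
  "Fbar \<T> t = measure \<T> {ennreal t<..}"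

definition supermultiplicative :: "(real \<Rightarrow> real) \<Rightarrow> bool" where
  "supermultiplicative F \<longleftrightarrow> (\<forall>x y. 0 \<le> x \<longrightarrow> 0 \<le> y \<longrightarrow> F (x + y) \<ge> F x * F y)"

definition submultiplicative :: "(real \<Rightarrow> real) \<Rightarrow> bool" where
  "submultiplicative F \<longleftrightarrow> (\<forall>x y. 0 \<le> x \<longrightarrow> 0 \<le> y \<longrightarrow> F (x + y) \<le> F x * F y)"

text \<open>Ttilde = R_0 + ... + R_(k-1) + T_k on the event that k is the first index with
  T_k \<le> R_k (indices start at 0).  Off that event (a null set under the hypotheses)
  the value is irrelevant; we put \<infinity>.\<close>
definition Ttilde :: "(nat \<Rightarrow> 'a \<Rightarrow> ennreal) \<Rightarrow> (nat \<Rightarrow> 'a \<Rightarrow> ennreal) \<Rightarrow> 'a \<Rightarrow> ennreal" where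
  "Ttilde T R \<omega> =
     (if \<exists>k. T k \<omega> \<le> R k \<omega>
      then (let k = (LEAST k. T k \<omega> \<le> R k \<omega>) in (\<Sum>l<k. R l \<omega>) + T k \<omega>)
      else \<infinity>)"

end

theory Submission
  imports Defs
begin

text \<open>Let \<open>T\<close> be a fresh copy of the completion time, independent of a restart time \<open>r\<close>, and let
  \<open>c\<close> be the time already elapsed. Restarting at \<open>r\<close> replaces \<open>P(c + T > t)\<close> by
  \<open>P(T \<le> r, c + T > t) + P(T > r) P(c + r + T' > t)\<close>. When \<open>c + r > t\<close> both are equal; otherwise
  they are \<open>Fbar(t - c)\<close> and \<open>Fbar(r) Fbar(t - c - r)\<close>, so super- resp. submultiplicativity says
  precisely that one restart cannot increase resp. decrease the tail. Conditioning on \<open>R\<^sub>m\<close> and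
  on the future attempts, which are independent of \<open>(T\<^sub>m, R\<^sub>m)\<close>, this one-step comparison
  is iterated over the first \<open>n\<close> attempts. What remains is the event that none of them completes:
  its probability \<open>\<Prod>k<n. P(R\<^sub>k < T\<^sub>k)\<close> tends to 0 in the supermultiplicative case, and in the
  submultiplicative case only its part with \<open>R\<^sub>0 + \<dots> + R\<^sub>n\<^sub>-\<^sub>1 \<le> t\<close> matters, which vanishes
  because the restart times sum to \<open>\<infinity>\<close>.\<close>

lemma Ttilde_unfold:
  "Ttilde T R \<omega> = (if T 0 \<omega> \<le> R 0 \<omega> then T 0 \<omega>
     else R 0 \<omega> + Ttilde (\<lambda>k. T (Suc k)) (\<lambda>k. R (Suc k)) \<omega>)"
proof (cases "T 0 \<omega> \<le> R 0 \<omega>")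
  case True
  then show ?thesis by (simp add: Ttilde_def exI[of _ 0])
next
  case False
  then have ex: "(\<exists>k. T k \<omega> \<le> R k \<omega>) \<longleftrightarrow> (\<exists>k. T (Suc k) \<omega> \<le> R (Suc k) \<omega>)"
    by (metis not0_implies_Suc)
  show ?thesis
  proof (cases "\<exists>k. T (Suc k) \<omega> \<le> R (Suc k) \<omega>")
    case True
    then obtain k where "T (Suc k) \<omega> \<le> R (Suc k) \<omega>" by blast
    then have "(LEAST k. T k \<omega> \<le> R k \<omega>) = Suc (LEAST k. T (Suc k) \<omega> \<le> R (Suc k) \<omega>)"
      by (rule Least_Suc) (use False in auto)
    then show ?thesis using True False ex
      by (simp add: Ttilde_def Let_def sum.lessThan_Suc_shift add.assoc del: sum.lessThan_Suc)
  qed (use False ex in \<open>simp add: Ttilde_def\<close>)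
qed

lemma borel_measurable_Ttilde[measurable]:
  assumes [measurable]: "\<And>k. T k \<in> borel_measurable M" "\<And>k. R k \<in> borel_measurable M"
  shows "Ttilde T R \<in> borel_measurable M"
proof -
  have first: "(\<lambda>\<omega>. (LEAST k. T k \<omega> \<le> R k \<omega>)) \<in> M \<rightarrow>\<^sub>M count_space UNIV"
    by measurable
  have "(\<lambda>\<omega>. (\<Sum>l<(LEAST k. T k \<omega> \<le> R k \<omega>). R l \<omega>) + T (LEAST k. T k \<omega> \<le> R k \<omega>) \<omega>)
      \<in> borel_measurable M"
    by (rule measurable_compose_countable[OF _ first, where f="\<lambda>k \<omega>. (\<Sum>l<k. R l \<omega>) + T k \<omega>"]) measurable
  then show ?thesis
    unfolding Ttilde_def Let_def by measurable
qed

text \<open>The coordinates of \<open>\<xi>\<close> are \<open>\<xi> (Inl k) = T\<^sub>k\<close> and \<open>\<xi> (Inr k) = R\<^sub>k\<close>.\<close>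
fun trunc_tail :: "ennreal \<Rightarrow> nat \<Rightarrow> nat \<Rightarrow> ennreal \<Rightarrow> (nat + nat \<Rightarrow> ennreal) \<Rightarrow> ennreal" where
  "trunc_tail t 0 m c \<xi> = 1"
| "trunc_tail t (Suc n) m c \<xi> =
     of_bool (\<xi> (Inl m) \<le> \<xi> (Inr m) \<and> t < c + \<xi> (Inl m))
     + of_bool (\<xi> (Inr m) < \<xi> (Inl m)) * trunc_tail t n (Suc m) (c + \<xi> (Inr m)) \<xi>"

lemma trunc_tail_cong:
  assumes "\<And>k. m \<le> k \<Longrightarrow> \<xi> (Inl k) = \<xi>' (Inl k) \<and> \<xi> (Inr k) = \<xi>' (Inr k)"
  shows "trunc_tail t n m c \<xi> = trunc_tail t n m c \<xi>'"
  using assms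
proof (induction n arbitrary: m c)
  case (Suc n)
  have "trunc_tail t n (Suc m) c' \<xi> = trunc_tail t n (Suc m) c' \<xi>'" for c'
    using Suc by simp
  then show ?case using Suc.prems[of m] by simp
qed simp

lemma measurable_trunc_tail[measurable]:
  assumes "\<And>k. m \<le> k \<Longrightarrow> Inl k \<in> K \<and> Inr k \<in> K"
  shows "(\<lambda>(c, \<xi>). trunc_tail t n m c \<xi>) \<in> borel_measurable (borel \<Otimes>\<^sub>M PiM K (\<lambda>_. borel))"
  using assms
proof (induction n arbitrary: m)
  case 0
  have "(\<lambda>(c, \<xi>). trunc_tail t 0 m c \<xi>) = (\<lambda>_. 1)" by auto
  then show ?case by simp
next
  case (Suc n)
  have [measurable]: "Inl m \<in> K" "Inr m \<in> K" using Suc.prems by auto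
  have "(\<lambda>x :: ennreal \<times> (nat + nat \<Rightarrow> ennreal). (fst x + snd x (Inr m), snd x)) \<in> borel \<Otimes>\<^sub>M PiM K (\<lambda>_. borel)
      \<rightarrow>\<^sub>M borel \<Otimes>\<^sub>M PiM K (\<lambda>_. borel)"
    using \<open>Inr m \<in> K\<close> by measurable
  from measurable_compose[OF this Suc.IH] Suc.prems
  have [measurable]: "(\<lambda>x. trunc_tail t n (Suc m) (fst x + snd x (Inr m)) (snd x))
      \<in> borel_measurable (borel \<Otimes>\<^sub>M PiM K (\<lambda>_. borel))"
    by (simp add: case_prod_beta)
  show ?case by (simp add: case_prod_beta) measurable
qed

definition sample_path :: "(nat \<Rightarrow> 'a \<Rightarrow> ennreal) \<Rightarrow> (nat \<Rightarrow> 'a \<Rightarrow> ennreal) \<Rightarrow> 'a \<Rightarrow> nat + nat \<Rightarrow> ennreal"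
  where "sample_path T R \<omega> = case_sum (\<lambda>k. T k \<omega>) (\<lambda>k. R k \<omega>)"

lemma sample_path_simps[simp]:
  "sample_path T R \<omega> (Inl k) = T k \<omega>" "sample_path T R \<omega> (Inr k) = R k \<omega>"
  by (simp_all add: sample_path_def)

lemma Ttilde_shift_Suc:
  "Ttilde (\<lambda>k. T (m + k)) (\<lambda>k. R (m + k)) \<omega> = (if T m \<omega> \<le> R m \<omega> then T m \<omega>
     else R m \<omega> + Ttilde (\<lambda>k. T (Suc m + k)) (\<lambda>k. R (Suc m + k)) \<omega>)"
  by (subst Ttilde_unfold) simp

lemma Ttilde_shift_early:
  "T m \<omega> \<le> R m \<omega> \<Longrightarrow> Ttilde (\<lambda>k. T (m + k)) (\<lambda>k. R (m + k)) \<omega> = T m \<omega>"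
  by (subst Ttilde_shift_Suc) simp

lemma trunc_tail_Suc_early:
  "T m \<omega> \<le> R m \<omega> \<Longrightarrow> trunc_tail t (Suc n) m c (sample_path T R \<omega>) = of_bool (t < c + T m \<omega>)"
  by (simp add: not_less)

lemma Ttilde_shift_late:
  "\<not> T m \<omega> \<le> R m \<omega> \<Longrightarrow> c + Ttilde (\<lambda>k. T (m + k)) (\<lambda>k. R (m + k)) \<omega>
     = (c + R m \<omega>) + Ttilde (\<lambda>k. T (Suc m + k)) (\<lambda>k. R (Suc m + k)) \<omega>"
  by (subst Ttilde_shift_Suc) (simp add: add.assoc)

lemma trunc_tail_Suc_late:
  "\<not> T m \<omega> \<le> R m \<omega> \<Longrightarrow>
     trunc_tail t (Suc n) m c (sample_path T R \<omega>) = trunc_tail t n (Suc m) (c + R m \<omega>) (sample_path T R \<omega>)"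
  by (simp add: not_le)

lemma indicator_Ttilde_le_trunc_tail:
  "of_bool (t < c + Ttilde (\<lambda>k. T (m + k)) (\<lambda>k. R (m + k)) \<omega>)
     \<le> trunc_tail t n m c (sample_path T R \<omega>)"
proof (induction n arbitrary: m c)
  case (Suc n)
  show ?case
  proof (cases "T m \<omega> \<le> R m \<omega>")
    case False
    show ?thesis
      unfolding Ttilde_shift_late[where T=T and R=R, OF False]
        trunc_tail_Suc_late[where T=T and R=R, OF False]
      by (rule Suc.IH[where m="Suc m"])
  qed (simp add: Ttilde_shift_early trunc_tail_Suc_early del: trunc_tail.simps)
qed simp

lemma trunc_tail_le_indicators:
  "trunc_tail t n m c (sample_path T R \<omega>)
     \<le> of_bool (t < c + Ttilde (\<lambda>k. T (m + k)) (\<lambda>k. R (m + k)) \<omega>)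
       + of_bool ((\<forall>j<n. R (m + j) \<omega> < T (m + j) \<omega>) \<and> c + (\<Sum>j<n. R (m + j) \<omega>) \<le> t)"
proof (induction n arbitrary: m c)
  case 0
  have "t < c \<Longrightarrow> t < c + Ttilde (\<lambda>k. T (m + k)) (\<lambda>k. R (m + k)) \<omega>"
    by (erule order.strict_trans2) simp
  then show ?case by (cases "t < c") (auto simp: not_less)
next
  case (Suc n)
  show ?case
  proof (cases "T m \<omega> \<le> R m \<omega>")
    case False
    have "(\<forall>j<Suc n. R (m + j) \<omega> < T (m + j) \<omega>) \<and> c + (\<Sum>j<Suc n. R (m + j) \<omega>) \<le> t
      \<longleftrightarrow> (\<forall>j<n. R (Suc m + j) \<omega> < T (Suc m + j) \<omega>) \<and> c + R m \<omega> + (\<Sum>j<n. R (Suc m + j) \<omega>) \<le> t"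
      using False by (auto simp: not_le less_Suc_eq_0_disj add.assoc sum.lessThan_Suc_shift simp del: sum.lessThan_Suc)
    then show ?thesis
      unfolding Ttilde_shift_late[where T=T and R=R, OF False]
        trunc_tail_Suc_late[where T=T and R=R, OF False]
      by (simp only: Suc.IH)
  qed (simp add: Ttilde_shift_early trunc_tail_Suc_early del: trunc_tail.simps)
qed

lemma nn_integral_of_bool:
  assumes "{x \<in> space M. P x} \<in> sets M"
  shows "(\<integral>\<^sup>+x. of_bool (P x) \<partial>M) = emeasure M {x \<in> space M. P x}"
proof -
  have "(\<integral>\<^sup>+x. of_bool (P x) \<partial>M) = (\<integral>\<^sup>+x. indicator {x \<in> space M. P x} x \<partial>M)"
    by (intro nn_integral_cong) (simp add: indicator_def)
  then show ?thesis using assms by simp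
qed

lemma (in prob_space) nn_integral_indep_var:
  assumes ind: "indep_var S X T Y" and f: "case_prod f \<in> borel_measurable (S \<Otimes>\<^sub>M T)"
  shows "(\<integral>\<^sup>+\<omega>. f (X \<omega>) (Y \<omega>) \<partial>M) = (\<integral>\<^sup>+\<omega>. \<integral>\<^sup>+\<omega>'. f (X \<omega>) (Y \<omega>') \<partial>M \<partial>M)"
proof -
  have rv: "random_variable S X" "random_variable T Y"
    and joint: "distr M S X \<Otimes>\<^sub>M distr M T Y = distr M (S \<Otimes>\<^sub>M T) (\<lambda>\<omega>. (X \<omega>, Y \<omega>))"
    using ind unfolding indep_var_distribution_eq by auto
  interpret Y: prob_space "distr M T Y" by (rule prob_space_distr) fact
  have f': "case_prod f \<in> borel_measurable (distr M S X \<Otimes>\<^sub>M distr M T Y)"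
    using f by (simp add: measurable_cong_sets[OF sets_pair_measure_cong[OF sets_distr sets_distr] refl])
  have inner: "(\<integral>\<^sup>+\<omega>'. f x (Y \<omega>') \<partial>M) = (\<integral>\<^sup>+y. f x y \<partial>distr M T Y)" if "x \<in> space S" for x
    using measurable_Pair2[OF f that] rv by (simp add: nn_integral_distr)
  have "(\<integral>\<^sup>+\<omega>. f (X \<omega>) (Y \<omega>) \<partial>M) = (\<integral>\<^sup>+p. case_prod f p \<partial>(distr M S X \<Otimes>\<^sub>M distr M T Y))"
    using rv f by (simp add: joint nn_integral_distr)
  also have "\<dots> = (\<integral>\<^sup>+x. \<integral>\<^sup>+y. f x y \<partial>distr M T Y \<partial>distr M S X)"
    using Y.nn_integral_fst[OF f'] by simp
  also have "\<dots> = (\<integral>\<^sup>+\<omega>. \<integral>\<^sup>+y. f (X \<omega>) y \<partial>distr M T Y \<partial>M)"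
    using f' rv by (subst nn_integral_distr) (auto intro: Y.borel_measurable_nn_integral)
  also have "\<dots> = (\<integral>\<^sup>+\<omega>. \<integral>\<^sup>+\<omega>'. f (X \<omega>) (Y \<omega>') \<partial>M \<partial>M)"
    using rv by (intro nn_integral_cong) (simp add: inner measurable_space)
  finally show ?thesis .
qed

locale ennreal_law = prob_space Tm for Tm :: "ennreal measure" +
  assumes sets_eq_borel: "sets Tm = sets borel"
begin

definition delayed_tail :: "real \<Rightarrow> ennreal \<Rightarrow> ennreal" where
  "delayed_tail t c = emeasure Tm {x. ennreal t < c + x}"

lemma space_Tm: "space Tm = UNIV"
  using sets_eq_imp_space_eq[OF sets_eq_borel] by simp

lemma pred_sets_Tm: "Measurable.pred borel P \<Longrightarrow> {x. P x} \<in> sets Tm"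
  unfolding sets_eq_borel by (simp add: Measurable.pred_def)

lemma borel_measurable_delayed_tail[measurable]: "delayed_tail t \<in> borel_measurable borel"
proof -
  have "{p \<in> space (borel \<Otimes>\<^sub>M borel). ennreal t < fst p + snd p} \<in> sets (borel \<Otimes>\<^sub>M borel)"
    by measurable
  then have "{(c, x). ennreal t < c + x} \<in> sets (borel \<Otimes>\<^sub>M Tm)"
    by (simp add: sets_pair_measure_cong[OF refl sets_eq_borel] space_pair_measure case_prod_beta')
  from measurable_emeasure_Pair[OF this] show ?thesis
    by (simp add: delayed_tail_def[abs_def] vimage_def)
qed

lemma nn_integral_race_indicators:
  "(\<integral>\<^sup>+x. of_bool (x \<le> r \<and> ennreal t < c + x) + of_bool (r < x) * K \<partial>Tm)
    = emeasure Tm {x. x \<le> r \<and> ennreal t < c + x} + emeasure Tm {x. r < x} * K"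
proof -
  have "(\<integral>\<^sup>+x. of_bool (P x) \<partial>Tm) = emeasure Tm {x. P x}" if "Measurable.pred borel P" for P
    using nn_integral_of_bool[of Tm P] pred_sets_Tm[OF that] by (simp add: space_Tm)
  then show ?thesis
    by (subst nn_integral_add)
       (auto simp: nn_integral_multc measurable_cong_sets[OF sets_eq_borel refl])
qed

lemma delayed_tail_ennreal:
  assumes "0 \<le> c" "c \<le> t"
  shows "delayed_tail t (ennreal c) = ennreal (Fbar Tm (t - c))"
proof -
  have "ennreal t < ennreal c + x \<longleftrightarrow> ennreal (t - c) < x" for x
    using assms by (cases x rule: ennreal_cases)
      (auto simp: ennreal_plus[symmetric] ennreal_less_iff simp del: ennreal_plus)
  then have "{x. ennreal t < ennreal c + x} = {ennreal (t - c)<..}"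
    by auto
  then show ?thesis by (simp add: delayed_tail_def Fbar_def emeasure_eq_measure)
qed

lemma Fbar_nonneg: "0 \<le> Fbar Tm t"
  by (simp add: Fbar_def)

text \<open>The tail at \<open>t\<close> of \<open>c + S\<close>, where \<open>S = T\<close> if \<open>T \<le> r\<close> and \<open>S = r + T'\<close> otherwise, for
  independent \<open>T, T'\<close> with law \<open>Tm\<close>.\<close>
definition restart_tail :: "real \<Rightarrow> ennreal \<Rightarrow> ennreal \<Rightarrow> ennreal" where
  "restart_tail t c r =
     emeasure Tm {x. x \<le> r \<and> ennreal t < c + x} + emeasure Tm {x. r < x} * delayed_tail t (c + r)"

lemma restart_tail_late:
  assumes "ennreal t < c + r"
  shows "restart_tail t c r = delayed_tail t c"
proof -
  have late: "ennreal t < c + x" if "r \<le> x" for x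
    using assms by (rule order.strict_trans2) (simp add: add_left_mono that)
  have "{x. ennreal t < c + r + x} = space Tm"
    using late[of "r + _"] by (auto simp: space_Tm add.assoc)
  then have "delayed_tail t (c + r) = 1"
    by (simp add: delayed_tail_def emeasure_space_1)
  moreover have "{x. ennreal t < c + x} = {x. x \<le> r \<and> ennreal t < c + x} \<union> {x. r < x}"
    using late by (auto simp: less_imp_le)
  moreover have "emeasure Tm ({x. x \<le> r \<and> ennreal t < c + x} \<union> {x. r < x})
      = emeasure Tm {x. x \<le> r \<and> ennreal t < c + x} + emeasure Tm {x. r < x}"
    by (rule plus_emeasure[symmetric]) (auto intro: pred_sets_Tm)
  ultimately show ?thesis by (simp add: restart_tail_def delayed_tail_def)
qed

lemma restart_tail_early:
  assumes "0 \<le> t" "c + r \<le> ennreal t"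
  obtains c0 r0 where "0 \<le> c0" "0 \<le> r0" "c0 + r0 \<le> t"
    "restart_tail t c r = ennreal (Fbar Tm r0 * Fbar Tm (t - c0 - r0))"
    "delayed_tail t c = ennreal (Fbar Tm (t - c0))"
proof -
  have "c \<noteq> \<top>" "r \<noteq> \<top>"
    using assms(2) by (auto simp: top_unique)
  then obtain c0 r0 where c0: "c = ennreal c0" "0 \<le> c0" and r0: "r = ennreal r0" "0 \<le> r0"
    by (metis ennreal_cases)
  have sum: "c0 + r0 \<le> t"
    using assms c0 r0 by (simp add: ennreal_plus[symmetric] del: ennreal_plus)
  have "c + x \<le> ennreal t" if "x \<le> r" for x
    using add_left_mono[OF that, of c] assms(2) by (rule order.trans)
  then have "{x. x \<le> r \<and> ennreal t < c + x} = {}"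
    by (auto simp: not_less[symmetric])
  then have "emeasure Tm {x. x \<le> r \<and> ennreal t < c + x} = 0"
    by (simp only: emeasure_empty)
  moreover have "emeasure Tm {x. r < x} = ennreal (Fbar Tm r0)"
    by (simp add: r0 Fbar_def emeasure_eq_measure greaterThan_def)
  moreover have "delayed_tail t (c + r) = ennreal (Fbar Tm (t - c0 - r0))"
    using delayed_tail_ennreal[of "c0 + r0" t] c0 r0 sum
    by (simp add: ennreal_plus[symmetric] diff_diff_eq del: ennreal_plus)
  ultimately have "restart_tail t c r = ennreal (Fbar Tm r0 * Fbar Tm (t - c0 - r0))"
    by (simp add: restart_tail_def ennreal_mult Fbar_nonneg)
  moreover have "delayed_tail t c = ennreal (Fbar Tm (t - c0))"
    using delayed_tail_ennreal[of c0 t] c0 r0 sum by simp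
  ultimately show ?thesis using that c0 r0 sum by blast
qed

lemma restart_tail_le:
  assumes "supermultiplicative (Fbar Tm)" "0 \<le> t"
  shows "restart_tail t c r \<le> delayed_tail t c"
proof (cases "ennreal t < c + r")
  case False
  then obtain c0 r0 where "0 \<le> r0" "c0 + r0 \<le> t"
    and eq: "restart_tail t c r = ennreal (Fbar Tm r0 * Fbar Tm (t - c0 - r0))"
      "delayed_tail t c = ennreal (Fbar Tm (t - c0))"
    using restart_tail_early[OF assms(2)] by (metis not_less)
  then have "Fbar Tm r0 * Fbar Tm (t - c0 - r0) \<le> Fbar Tm (r0 + (t - c0 - r0))"
    by (intro assms(1)[unfolded supermultiplicative_def, rule_format]) simp_all
  then show ?thesis by (simp add: eq ennreal_leI)
qed (simp add: restart_tail_late)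

lemma restart_tail_ge:
  assumes "submultiplicative (Fbar Tm)" "0 \<le> t"
  shows "delayed_tail t c \<le> restart_tail t c r"
proof (cases "ennreal t < c + r")
  case False
  then obtain c0 r0 where "0 \<le> r0" "c0 + r0 \<le> t"
    and eq: "restart_tail t c r = ennreal (Fbar Tm r0 * Fbar Tm (t - c0 - r0))"
      "delayed_tail t c = ennreal (Fbar Tm (t - c0))"
    using restart_tail_early[OF assms(2)] by (metis not_less)
  then have "Fbar Tm (r0 + (t - c0 - r0)) \<le> Fbar Tm r0 * Fbar Tm (t - c0 - r0)"
    by (intro assms(1)[unfolded submultiplicative_def, rule_format]) simp_all
  then show ?thesis by (simp add: eq ennreal_leI)
qed (simp add: restart_tail_late)

end

locale restart_model = prob_space M + law: ennreal_law Tm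
  for M :: "'a measure" and Tm :: "ennreal measure" +
  fixes T R :: "nat \<Rightarrow> 'a \<Rightarrow> ennreal"
  assumes T_meas[measurable]: "\<And>k. T k \<in> borel_measurable M"
    and R_meas[measurable]: "\<And>k. R k \<in> borel_measurable M"
    and T_law: "\<And>k. distr M borel (T k) = Tm"
    and indep: "indep_vars (\<lambda>_. borel) (\<lambda>i. case i of Inl k \<Rightarrow> T k | Inr k \<Rightarrow> R k) UNIV"
begin

lemma sample_path_eq: "(\<lambda>i. (case i of Inl k \<Rightarrow> T k | Inr k \<Rightarrow> R k) \<omega>) = sample_path T R \<omega>"
  by (auto simp: sample_path_def split: sum.split)

lemma measurable_sample_path[measurable]: "sample_path T R \<in> M \<rightarrow>\<^sub>M PiM UNIV (\<lambda>_. borel)"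
proof -
  have "(\<lambda>\<omega> i. (case i of Inl k \<Rightarrow> T k | Inr k \<Rightarrow> R k) \<omega>) \<in> M \<rightarrow>\<^sub>M PiM UNIV (\<lambda>_. borel)"
    by (rule measurable_PiM_single') (auto split: sum.split)
  then show ?thesis by (simp add: sample_path_eq[abs_def])
qed

lemma borel_measurable_trunc_tail_path[measurable]:
  "(\<lambda>\<omega>. trunc_tail t n m c (sample_path T R \<omega>)) \<in> borel_measurable M"
proof -
  have "(\<lambda>\<omega>. (c, sample_path T R \<omega>)) \<in> M \<rightarrow>\<^sub>M borel \<Otimes>\<^sub>M PiM UNIV (\<lambda>_. borel)"
    by measurable
  from measurable_compose[OF this measurable_trunc_tail[of m UNIV t n]] show ?thesis
    by simp
qed

lemma indep_var_restart_completion: "indep_var borel (R m) borel (T m)"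
proof -
  have "indep_var (PiM {Inr m} (\<lambda>_. borel)) (\<lambda>\<omega>. restrict (\<lambda>i. (case i of Inl k \<Rightarrow> T k | Inr k \<Rightarrow> R k) \<omega>) {Inr m})
      (PiM {Inl m} (\<lambda>_. borel)) (\<lambda>\<omega>. restrict (\<lambda>i. (case i of Inl k \<Rightarrow> T k | Inr k \<Rightarrow> R k) \<omega>) {Inl m})"
    by (rule indep_var_restrict[OF indep]) auto
  from indep_var_compose[OF this measurable_component_singleton measurable_component_singleton]
  show ?thesis by (simp add: o_def)
qed

lemma nn_integral_restart:
  assumes [measurable]: "G \<in> borel_measurable borel"
  shows "(\<integral>\<^sup>+\<omega>. of_bool (T m \<omega> \<le> R m \<omega> \<and> ennreal t < c + T m \<omega>) + of_bool (R m \<omega> < T m \<omega>) * G (c + R m \<omega>) \<partial>M)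
    = (\<integral>\<^sup>+\<omega>. emeasure Tm {x. x \<le> R m \<omega> \<and> ennreal t < c + x} + emeasure Tm {x. R m \<omega> < x} * G (c + R m \<omega>) \<partial>M)"
proof -
  define f where "f r x = of_bool (x \<le> r \<and> ennreal t < c + x) + of_bool (r < x) * G (c + r)" for r x :: ennreal
  have [measurable]: "case_prod f \<in> borel_measurable (borel \<Otimes>\<^sub>M borel)"
    unfolding f_def by measurable
  have "(\<integral>\<^sup>+\<omega>'. f r (T m \<omega>') \<partial>M) = (\<integral>\<^sup>+x. f r x \<partial>Tm)" for r
    by (subst T_law[of m, symmetric], subst nn_integral_distr) (auto simp: f_def)
  then show ?thesis
    using nn_integral_indep_var[OF indep_var_restart_completion, of f]
    by (simp add: f_def law.nn_integral_race_indicators)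
qed

lemma nn_integral_trunc_tail_Suc:
  "(\<integral>\<^sup>+\<omega>. trunc_tail t (Suc n) m c (sample_path T R \<omega>) \<partial>M)
    = (\<integral>\<^sup>+\<omega>. of_bool (T m \<omega> \<le> R m \<omega> \<and> t < c + T m \<omega>) + of_bool (R m \<omega> < T m \<omega>)
        * (\<integral>\<^sup>+\<omega>'. trunc_tail t n (Suc m) (c + R m \<omega>) (sample_path T R \<omega>') \<partial>M) \<partial>M)"
proof -
  define K1 where "K1 = {Inl m, Inr m}"
  define K2 where "K2 = Inl ` {Suc m..} \<union> Inr ` {Suc m..}"
  have [measurable]: "Inl m \<in> K1" "Inr m \<in> K1" by (simp_all add: K1_def)
  have "indep_var (PiM K1 (\<lambda>_. borel)) (\<lambda>\<omega>. restrict (\<lambda>i. (case i of Inl k \<Rightarrow> T k | Inr k \<Rightarrow> R k) \<omega>) K1)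
      (PiM K2 (\<lambda>_. borel)) (\<lambda>\<omega>. restrict (\<lambda>i. (case i of Inl k \<Rightarrow> T k | Inr k \<Rightarrow> R k) \<omega>) K2)"
    by (rule indep_var_restrict[OF indep]) (auto simp: K1_def K2_def)
  then have ind: "indep_var (PiM K1 (\<lambda>_. borel)) (\<lambda>\<omega>. restrict (sample_path T R \<omega>) K1)
      (PiM K2 (\<lambda>_. borel)) (\<lambda>\<omega>. restrict (sample_path T R \<omega>) K2)"
    by (simp add: sample_path_eq)
  define f where "f z y = of_bool (z (Inl m) \<le> z (Inr m) \<and> t < c + z (Inl m))
    + of_bool (z (Inr m) < z (Inl m)) * trunc_tail t n (Suc m) (c + z (Inr m)) y"
    for z y :: "nat + nat \<Rightarrow> ennreal"
  have trunc: "(\<lambda>(c, \<xi>). trunc_tail t n (Suc m) c \<xi>) \<in> borel_measurable (borel \<Otimes>\<^sub>M PiM K2 (\<lambda>_. borel))"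
    by (rule measurable_trunc_tail) (simp add: K2_def)
  have "(\<lambda>x. (c + fst x (Inr m), snd x)) \<in> PiM K1 (\<lambda>_. borel) \<Otimes>\<^sub>M PiM K2 (\<lambda>_. borel)
      \<rightarrow>\<^sub>M borel \<Otimes>\<^sub>M PiM K2 (\<lambda>_. borel)"
    by measurable
  from measurable_compose[OF this trunc]
  have [measurable]: "(\<lambda>(z, y). trunc_tail t n (Suc m) (c + z (Inr m)) y)
      \<in> borel_measurable (PiM K1 (\<lambda>_. borel) \<Otimes>\<^sub>M PiM K2 (\<lambda>_. borel))"
    by (simp add: case_prod_beta')
  have "case_prod f \<in> borel_measurable (PiM K1 (\<lambda>_. borel) \<Otimes>\<^sub>M PiM K2 (\<lambda>_. borel))"
    unfolding f_def by measurable
  note independence = nn_integral_indep_var[OF ind this]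
  have local: "trunc_tail t n (Suc m) c' (restrict \<xi> K2) = trunc_tail t n (Suc m) c' \<xi>" for c' \<xi>
    by (rule trunc_tail_cong) (simp add: K2_def)
  have inner: "(\<integral>\<^sup>+\<omega>'. f (restrict (sample_path T R \<omega>) K1) (restrict (sample_path T R \<omega>') K2) \<partial>M)
      = of_bool (T m \<omega> \<le> R m \<omega> \<and> t < c + T m \<omega>) + of_bool (R m \<omega> < T m \<omega>)
        * (\<integral>\<^sup>+\<omega>'. trunc_tail t n (Suc m) (c + R m \<omega>) (sample_path T R \<omega>') \<partial>M)" for \<omega>
    by (simp add: f_def local K1_def nn_integral_add nn_integral_cmult emeasure_space_1)
  have "trunc_tail t (Suc n) m c (sample_path T R \<omega>)
      = f (restrict (sample_path T R \<omega>) K1) (restrict (sample_path T R \<omega>) K2)" for \<omega>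
    by (simp add: f_def local K1_def)
  then show ?thesis
    using independence by (simp only: inner)
qed

lemma nn_integral_trunc_tail_le:
  assumes "supermultiplicative (Fbar Tm)" "0 \<le> t"
  shows "(\<integral>\<^sup>+\<omega>. trunc_tail (ennreal t) n m c (sample_path T R \<omega>) \<partial>M)
    \<le> law.delayed_tail t c + (\<Prod>j<n. emeasure M {\<omega> \<in> space M. R (m + j) \<omega> < T (m + j) \<omega>})"
proof (induction n arbitrary: m c)
  case 0
  then show ?case by (simp add: emeasure_space_1)
next
  case (Suc n)
  let ?P = "\<Prod>j<n. emeasure M {\<omega> \<in> space M. R (Suc m + j) \<omega> < T (Suc m + j) \<omega>}"
  let ?done = "\<lambda>\<omega>. of_bool (T m \<omega> \<le> R m \<omega> \<and> ennreal t < c + T m \<omega>) :: ennreal"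
  let ?restart = "\<lambda>\<omega>. of_bool (R m \<omega> < T m \<omega>) :: ennreal"
  have "(\<integral>\<^sup>+\<omega>. trunc_tail (ennreal t) (Suc n) m c (sample_path T R \<omega>) \<partial>M)
      \<le> (\<integral>\<^sup>+\<omega>. ?done \<omega> + ?restart \<omega> * (law.delayed_tail t (c + R m \<omega>) + ?P) \<partial>M)"
    unfolding nn_integral_trunc_tail_Suc
    by (intro nn_integral_mono add_left_mono mult_left_mono Suc.IH) simp
  also have "\<dots> = (\<integral>\<^sup>+\<omega>. (?done \<omega> + ?restart \<omega> * law.delayed_tail t (c + R m \<omega>)) + ?P * ?restart \<omega> \<partial>M)"
    by (intro nn_integral_cong) (simp add: distrib_left add.assoc mult.commute)
  also have "\<dots> = (\<integral>\<^sup>+\<omega>. ?done \<omega> + ?restart \<omega> * law.delayed_tail t (c + R m \<omega>) \<partial>M)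
      + ?P * (\<integral>\<^sup>+\<omega>. ?restart \<omega> \<partial>M)"
    by (simp add: nn_integral_add nn_integral_cmult)
  also have "(\<integral>\<^sup>+\<omega>. ?done \<omega> + ?restart \<omega> * law.delayed_tail t (c + R m \<omega>) \<partial>M)
      = (\<integral>\<^sup>+\<omega>. law.restart_tail t c (R m \<omega>) \<partial>M)"
    by (simp add: nn_integral_restart law.restart_tail_def)
  also have "\<dots> \<le> (\<integral>\<^sup>+\<omega>. law.delayed_tail t c \<partial>M)"
    by (intro nn_integral_mono law.restart_tail_le assms)
  also have "(\<integral>\<^sup>+\<omega>. ?restart \<omega> \<partial>M) = emeasure M {\<omega> \<in> space M. R m \<omega> < T m \<omega>}"
    by (rule nn_integral_of_bool) measurable
  finally show ?case
    by (simp add: emeasure_space_1 prod.lessThan_Suc_shift mult.commute del: prod.lessThan_Suc)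
qed

lemma nn_integral_trunc_tail_ge:
  assumes "submultiplicative (Fbar Tm)" "0 \<le> t"
  shows "law.delayed_tail t c \<le> (\<integral>\<^sup>+\<omega>. trunc_tail (ennreal t) n m c (sample_path T R \<omega>) \<partial>M)"
proof (induction n arbitrary: m c)
  case 0
  then show ?case by (simp add: emeasure_space_1 law.delayed_tail_def law.emeasure_le_1)
next
  case (Suc n)
  have "law.delayed_tail t c = (\<integral>\<^sup>+\<omega>. law.delayed_tail t c \<partial>M)"
    by (simp add: emeasure_space_1)
  also have "\<dots> \<le> (\<integral>\<^sup>+\<omega>. law.restart_tail t c (R m \<omega>) \<partial>M)"
    by (intro nn_integral_mono law.restart_tail_ge assms)
  also have "\<dots> = (\<integral>\<^sup>+\<omega>. of_bool (T m \<omega> \<le> R m \<omega> \<and> ennreal t < c + T m \<omega>)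
      + of_bool (R m \<omega> < T m \<omega>) * law.delayed_tail t (c + R m \<omega>) \<partial>M)"
    by (simp add: nn_integral_restart law.restart_tail_def)
  also have "\<dots> \<le> (\<integral>\<^sup>+\<omega>. trunc_tail (ennreal t) (Suc n) m c (sample_path T R \<omega>) \<partial>M)"
    unfolding nn_integral_trunc_tail_Suc
    by (intro nn_integral_mono add_left_mono mult_left_mono Suc.IH) simp
  finally show ?case .
qed

lemma emeasure_Ttilde_gt:
  "emeasure M {\<omega> \<in> space M. t < Ttilde T R \<omega>} = (\<integral>\<^sup>+\<omega>. of_bool (t < Ttilde T R \<omega>) \<partial>M)"
  by (rule nn_integral_of_bool[symmetric]) measurable

lemma prob_Ttilde_gt_le:
  assumes sup: "supermultiplicative (Fbar Tm)" and t: "0 \<le> t"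
    and prod0: "(\<lambda>n. \<Prod>k<n. measure M {\<omega> \<in> space M. R k \<omega> < T k \<omega>}) \<longlonglongrightarrow> 0"
  shows "measure M {\<omega> \<in> space M. ennreal t < Ttilde T R \<omega>} \<le> Fbar Tm t"
proof -
  let ?E = "{\<omega> \<in> space M. ennreal t < Ttilde T R \<omega>}"
  let ?p = "\<lambda>n. \<Prod>k<n. measure M {\<omega> \<in> space M. R k \<omega> < T k \<omega>}"
  have bound: "emeasure M ?E \<le> ennreal (Fbar Tm t) + ennreal (?p n)" for n
  proof -
    have "emeasure M ?E \<le> (\<integral>\<^sup>+\<omega>. trunc_tail (ennreal t) n 0 0 (sample_path T R \<omega>) \<partial>M)"
      unfolding emeasure_Ttilde_gt
      by (intro nn_integral_mono indicator_Ttilde_le_trunc_tail[where m=0 and c=0, simplified])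
    also have "\<dots> \<le> law.delayed_tail t 0 + (\<Prod>j<n. emeasure M {\<omega> \<in> space M. R j \<omega> < T j \<omega>})"
      using nn_integral_trunc_tail_le[OF sup t, of n 0 0] by simp
    also have "\<dots> = ennreal (Fbar Tm t) + ennreal (?p n)"
      using law.delayed_tail_ennreal[of 0 t] t by (simp add: emeasure_eq_measure prod_ennreal)
    finally show ?thesis .
  qed
  have "(\<lambda>n. ennreal (Fbar Tm t) + ennreal (?p n)) \<longlonglongrightarrow> ennreal (Fbar Tm t) + ennreal 0"
    by (intro tendsto_add tendsto_const tendsto_ennrealI prod0)
  then have "emeasure M ?E \<le> ennreal (Fbar Tm t) + ennreal 0"
    by (rule LIMSEQ_le_const) (use bound in blast)
  then show ?thesis
    by (simp add: emeasure_eq_measure law.Fbar_nonneg)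
qed

lemma emeasure_all_restarts_le_tendsto_0:
  assumes divergent: "AE \<omega> in M. (\<lambda>k. \<Sum>l<k. R l \<omega>) \<longlonglongrightarrow> \<infinity>"
  shows "(\<lambda>n. emeasure M {\<omega> \<in> space M. (\<forall>j<n. R j \<omega> < T j \<omega>) \<and> (\<Sum>j<n. R j \<omega>) \<le> ennreal t})
    \<longlonglongrightarrow> 0"
proof -
  define A where "A n = {\<omega> \<in> space M. (\<forall>j<n. R j \<omega> < T j \<omega>) \<and> (\<Sum>j<n. R j \<omega>) \<le> ennreal t}" for n
  have A_sets: "A n \<in> sets M" for n
    unfolding A_def by measurable
  have "decseq A"
  proof (rule decseq_SucI, rule subsetI)
    fix n \<omega> assume "\<omega> \<in> A (Suc n)"
    then have "\<omega> \<in> space M" "\<forall>j<n. R j \<omega> < T j \<omega>" and sum: "(\<Sum>j<n. R j \<omega>) + R n \<omega> \<le> ennreal t"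
      by (auto simp: A_def)
    moreover have "(\<Sum>j<n. R j \<omega>) \<le> ennreal t"
      using add_increasing2[OF zero_le order.refl] sum by (rule order.trans)
    ultimately show "\<omega> \<in> A n"
      by (simp add: A_def)
  qed
  moreover have "emeasure M (\<Inter>n. A n) = 0"
  proof -
    have "AE \<omega> in M. \<not> (\<forall>n. (\<forall>j<n. R j \<omega> < T j \<omega>) \<and> (\<Sum>j<n. R j \<omega>) \<le> ennreal t)"
      using divergent
    proof eventually_elim
      case (elim \<omega>)
      from order_tendstoD(1)[OF this, of "ennreal t"]
      obtain k where "ennreal t < (\<Sum>l<k. R l \<omega>)"
        by (auto simp: eventually_sequentially)
      then show ?case by (auto simp: not_le)
    qed
    moreover have "(\<Inter>n. A n) = {\<omega> \<in> space M. \<forall>n. (\<forall>j<n. R j \<omega> < T j \<omega>) \<and> (\<Sum>j<n. R j \<omega>) \<le> ennreal t}"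
      by (auto simp: A_def)
    ultimately show ?thesis
      by (simp add: emeasure_eq_0_AE)
  qed
  ultimately show ?thesis
    using Lim_emeasure_decseq[of A M] A_sets by (simp add: image_subset_iff emeasure_finite A_def)
qed

lemma prob_Ttilde_gt_ge:
  assumes sub: "submultiplicative (Fbar Tm)" and t: "0 \<le> t"
    and divergent: "AE \<omega> in M. (\<lambda>k. \<Sum>l<k. R l \<omega>) \<longlonglongrightarrow> \<infinity>"
  shows "Fbar Tm t \<le> measure M {\<omega> \<in> space M. ennreal t < Ttilde T R \<omega>}"
proof -
  let ?E = "{\<omega> \<in> space M. ennreal t < Ttilde T R \<omega>}"
  define A where "A n = {\<omega> \<in> space M. (\<forall>j<n. R j \<omega> < T j \<omega>) \<and> (\<Sum>j<n. R j \<omega>) \<le> ennreal t}" for n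
  have bound: "ennreal (Fbar Tm t) \<le> emeasure M ?E + emeasure M (A n)" for n
  proof -
    have "ennreal (Fbar Tm t) \<le> (\<integral>\<^sup>+\<omega>. trunc_tail (ennreal t) n 0 0 (sample_path T R \<omega>) \<partial>M)"
      using nn_integral_trunc_tail_ge[OF sub t, of 0 n 0] law.delayed_tail_ennreal[of 0 t] t by simp
    also have "\<dots> \<le> (\<integral>\<^sup>+\<omega>. of_bool (ennreal t < Ttilde T R \<omega>)
        + of_bool ((\<forall>j<n. R j \<omega> < T j \<omega>) \<and> (\<Sum>j<n. R j \<omega>) \<le> ennreal t) \<partial>M)"
      by (intro nn_integral_mono trunc_tail_le_indicators[where m=0 and c=0, simplified])
    also have "\<dots> = (\<integral>\<^sup>+\<omega>. of_bool (ennreal t < Ttilde T R \<omega>) \<partial>M)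
        + (\<integral>\<^sup>+\<omega>. of_bool ((\<forall>j<n. R j \<omega> < T j \<omega>) \<and> (\<Sum>j<n. R j \<omega>) \<le> ennreal t) \<partial>M)"
      by (rule nn_integral_add) measurable
    also have "(\<integral>\<^sup>+\<omega>. of_bool ((\<forall>j<n. R j \<omega> < T j \<omega>) \<and> (\<Sum>j<n. R j \<omega>) \<le> ennreal t) \<partial>M)
        = emeasure M (A n)"
      unfolding A_def by (rule nn_integral_of_bool) measurable
    finally show ?thesis
      by (simp add: emeasure_Ttilde_gt)
  qed
  have "(\<lambda>n. emeasure M (A n)) \<longlonglongrightarrow> 0"
    unfolding A_def by (rule emeasure_all_restarts_le_tendsto_0[OF divergent])
  then have "(\<lambda>n. emeasure M ?E + emeasure M (A n)) \<longlonglongrightarrow> emeasure M ?E + 0"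
    by (intro tendsto_add tendsto_const)
  then have "ennreal (Fbar Tm t) \<le> emeasure M ?E + 0"
    by (rule LIMSEQ_le_const) (use bound in blast)
  then show ?thesis
    by (simp add: emeasure_eq_measure)
qed

end

theorem mainTheorem12:
  fixes M :: "'a measure" and \<T> :: "ennreal measure"
    and T R :: "nat \<Rightarrow> 'a \<Rightarrow> ennreal"
  assumes law: "prob_space \<T>" "sets \<T> = sets borel"
    and pos: "emeasure \<T> {0<..} > 0"
    and supp: "Inf (measure_support \<T>) = 0"
    and M: "prob_space M"
    and T_meas: "\<And>k. T k \<in> borel_measurable M"
    and R_meas: "\<And>k. R k \<in> borel_measurable M"
    and T_law: "\<And>k. distr M borel (T k) = \<T>"
    and indep: "prob_space.indep_vars M (\<lambda>_. borel)
                  (\<lambda>i. case i of Inl k \<Rightarrow> T k | Inr k \<Rightarrow> R k) UNIV"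
    and prod0: "(\<lambda>n. \<Prod>k<n. measure M {\<omega> \<in> space M. R k \<omega> < T k \<omega>}) \<longlonglongrightarrow> 0"
  shows "(supermultiplicative (Fbar \<T>) \<longrightarrow>
            (\<forall>t::real. 0 \<le> t \<longrightarrow>
               measure M {\<omega> \<in> space M. Ttilde T R \<omega> > ennreal t} \<le> Fbar \<T> t))
       \<and> (submultiplicative (Fbar \<T>) \<and>
            (AE \<omega> in M. (\<lambda>k. \<Sum>l<k. R l \<omega>) \<longlonglongrightarrow> \<infinity>) \<longrightarrow>
            (\<forall>t::real. 0 \<le> t \<longrightarrow>
               measure M {\<omega> \<in> space M. Ttilde T R \<omega> > ennreal t} \<ge> Fbar \<T> t))"
proof -
  interpret restart_model M \<T> T R
    using law M T_meas R_meas T_law indep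
    by (simp add: restart_model_def restart_model_axioms_def ennreal_law_def ennreal_law_axioms_def)
  show ?thesis
    using prob_Ttilde_gt_le[OF _ _ prod0] prob_Ttilde_gt_ge by simp
qed

end
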